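(* Let $k,d,n\in\mathbb N$, $Q,K,V\in\mathbb R^{k\times d}$, $A:=K^\top Q/\sqrt{k}$ and $R>0$. Then the self-attention map $f$ with parameters $(A,V)$ is Lipschitz continuous on $B_R^n$ (with respect to the Frobenius norm on input and output), and $$\mathrm{Lip}\big(f_{|B_R^n}\big)\le \sqrt{3}\,\|V\|_2\big(\|A\|_2^2R^4(4n+1)+n\big)^{1/2}.$$
   Context: For $X=(x_1,\dots,x_n)\in(\mathbb R^d)^n$, self-attention with parameters $(A,V)$ is $f(X)=\big(V\sum_{j=1}^nP_{ij}x_j\big)_{1\le i\le n}\in(\mathbb R^k)^n$, where $P_{ij}=\exp(x_i^\top A^\top x_j)/\sum_{l=1}^n\exp(x_i^\top A^\top x_l)$. The spaces $(\mathbb R^d)^n$ and $(\mathbb R^k)^n$ carry the Frobenius norm $\|X\|_F=(\sum_i|x_i|^2)^{1/2}$, where $|\cdot|$ is the Euclidean norm. $B_R\subset\mathbb R^d$ is the closed Euclidean ball of center $0$ and radius $R$. For $\mathcal X\subset(\mathbb R^d)^n$, $\mathrm{Lip}(f_{|\mathcal X})=\sup_{X\ne Y\in\mathcal X}\|f(X)-f(Y)\|_F/\|X-Y\|_F$. $\|\cdot\|_2$ denotes the spectral (operator) norm of a matrix. *)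

theory Defs
  imports "HOL-Analysis.Analysis"
begin

text \<open>Tokens are indexed by a finite type 'n (so n = CARD('n)); a sequence
  X = (x_1,...,x_n) in (R^d)^n is an element of (real^'d)^'n, whose norm is
  exactly the Frobenius norm (sqrt of the sum of squared Euclidean norms).
  Matrices in R^{k x d} are real^'d^'k.\<close>

definition spectral_norm :: "real^'a^'b \<Rightarrow> real" where
  "spectral_norm M = onorm (\<lambda>x. M *v x)"

definition attn_P :: "real^'d^'d \<Rightarrow> (real^'d)^'n \<Rightarrow> 'n \<Rightarrow> 'n \<Rightarrow> real" where
  "attn_P A X i j =
     exp ((X$i) \<bullet> (transpose A *v (X$j))) /
     (\<Sum>l\<in>UNIV. exp ((X$i) \<bullet> (transpose A *v (X$l))))"

definition self_attention ::
  "real^'d^'d \<Rightarrow> real^'d^'k \<Rightarrow> (real^'d)^'n \<Rightarrow> (real^'k)^'n" where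
  "self_attention A V X = (\<chi> i. V *v (\<Sum>j\<in>UNIV. attn_P A X i j *\<^sub>R (X$j)))"

definition ball_tokens :: "real \<Rightarrow> ((real^'d)^'n) set" where
  "ball_tokens R = {X. \<forall>i. norm (X$i) \<le> R}"

end

theory Submission
  imports Defs
begin

text \<open>Let \<open>g\<^sub>i(X) = \<Sum>\<^sub>j P\<^sub>i\<^sub>j x\<^sub>j\<close>, so that \<open>f(X)\<^sub>i = V g\<^sub>i(X)\<close>. Fix a token \<open>i\<close> and a direction \<open>w\<close>,
  and move the input along the segment from \<open>Y\<close> to \<open>X\<close>, which stays in \<open>B\<^sub>R\<^sup>n\<close> by convexity.
  Along the segment \<open>\<langle>w, g\<^sub>i\<rangle>\<close> is a softmax average of the values \<open>\<langle>z\<^sub>j, w\<rangle>\<close> with scores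
  \<open>z\<^sub>i\<^sup>T A\<^sup>T z\<^sub>j\<close>; its derivative is the covariance, under the softmax weights, of the score
  derivatives and the values, plus the softmax average of the value derivatives. Bounding the
  covariance by Cauchy--Schwarz, applying the mean value theorem and taking \<open>w\<close> to be the increment
  itself gives \<open>|g\<^sub>i(X) - g\<^sub>i(Y)| \<le> \<surd>2 \<parallel>A\<parallel>\<^sub>2 R\<^sup>2 \<surd>(|x\<^sub>i - y\<^sub>i|\<^sup>2 + \<parallel>X - Y\<parallel>\<^sup>2) + \<parallel>X - Y\<parallel>\<close>.
  Applying \<open>V\<close>, squaring and summing over \<open>i\<close> yields the constant.\<close>

lemma spectral_norm_nonneg: "0 \<le> spectral_norm M"
  unfolding spectral_norm_def by (rule onorm_pos_le[OF matrix_vector_mul_bounded_linear])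

lemma norm_matrix_vector_mult_le: "norm (M *v x) \<le> spectral_norm M * norm x"
  unfolding spectral_norm_def by (rule onorm[OF matrix_vector_mul_bounded_linear])

lemma abs_inner_transpose_le:
  "\<bar>x \<bullet> (transpose A *v y)\<bar> \<le> spectral_norm A * norm x * norm y"
proof -
  have "x \<bullet> (transpose A *v y) = (A *v x) \<bullet> y"
    by (metis dot_lmul_matrix vector_transpose_matrix)
  also have "\<bar>\<dots>\<bar> \<le> norm (A *v x) * norm y"
    by (rule Cauchy_Schwarz_ineq2)
  also have "\<dots> \<le> spectral_norm A * norm x * norm y"
    by (intro mult_right_mono norm_matrix_vector_mult_le) simp
  finally show ?thesis .
qed

lemma power2_norm_vec: "(norm x)\<^sup>2 = (\<Sum>i\<in>UNIV. (norm (x $ i))\<^sup>2)"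
  unfolding norm_vec_def L2_set_def by (simp add: sum_nonneg)

lemma norm_segment_le:
  fixes x y :: "'a::real_normed_vector"
  assumes "norm x \<le> R" "norm y \<le> R" "0 \<le> t" "t \<le> 1"
  shows "norm (y + t *\<^sub>R (x - y)) \<le> R"
proof -
  have "(1 - t) *\<^sub>R y + t *\<^sub>R x \<in> cball 0 R"
    using assms by (intro convexD[OF convex_cball]) auto
  moreover have "y + t *\<^sub>R (x - y) = (1 - t) *\<^sub>R y + t *\<^sub>R x"
    by (simp add: algebra_simps)
  ultimately show ?thesis by simp
qed

lemma has_real_derivative_inner_matrix_line:
  fixes M :: "real^'d^'d" and u v p q :: "real^'d"
  shows "((\<lambda>t. (u + t *\<^sub>R v) \<bullet> (M *v (p + t *\<^sub>R q))) has_real_derivative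
           v \<bullet> (M *v (p + t *\<^sub>R q)) + (u + t *\<^sub>R v) \<bullet> (M *v q)) (at t)"
proof -
  have quadratic: "(\<lambda>t. (u + t *\<^sub>R v) \<bullet> (M *v (p + t *\<^sub>R q))) =
      (\<lambda>t. u \<bullet> (M *v p) + t * (v \<bullet> (M *v p) + u \<bullet> (M *v q)) + t * t * (v \<bullet> (M *v q)))"
    by (simp add: fun_eq_iff algebra_simps)
  show ?thesis
    unfolding quadratic
    by (rule derivative_eq_intros refl)+ (simp add: algebra_simps)
qed

lemma abs_weighted_mean_le:
  fixes p c :: "'j \<Rightarrow> real"
  assumes "\<forall>j\<in>S. 0 \<le> p j" "sum p S = 1" "\<forall>j\<in>S. \<bar>c j\<bar> \<le> C"
  shows "\<bar>\<Sum>j\<in>S. p j * c j\<bar> \<le> C"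
proof -
  have "\<bar>\<Sum>j\<in>S. p j * c j\<bar> \<le> (\<Sum>j\<in>S. \<bar>p j * c j\<bar>)"
    by (rule sum_abs)
  also have "\<dots> \<le> (\<Sum>j\<in>S. p j * C)"
    using assms(1,3) by (intro sum_mono) (simp add: abs_mult mult_left_mono)
  also have "\<dots> = C"
    using assms(2) by (simp add: sum_distrib_right[symmetric])
  finally show ?thesis .
qed

lemma abs_weighted_covariance_le:
  fixes p a c :: "'j \<Rightarrow> real"
  assumes weights: "\<forall>j\<in>S. 0 \<le> p j" "sum p S = 1"
    and "\<forall>j\<in>S. (a j)\<^sup>2 \<le> B" and "\<forall>j\<in>S. \<bar>c j\<bar> \<le> C"
  shows "\<bar>(\<Sum>j\<in>S. p j * a j * c j) - (\<Sum>j\<in>S. p j * a j) * (\<Sum>j\<in>S. p j * c j)\<bar> \<le> C * sqrt B"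
proof -
  define m where "m = (\<Sum>j\<in>S. p j * a j)"
  have "finite S" "S \<noteq> {}"
    using weights(2) sum.infinite by fastforce+
  then have "0 \<le> C" "0 \<le> B"
    using assms(3,4) by (meson abs_ge_zero all_not_in_conv order_trans zero_le_power2)+
  have second_moment_a: "(\<Sum>j\<in>S. p j * (a j)\<^sup>2) \<le> B"
    using abs_weighted_mean_le[OF weights, of "\<lambda>j. (a j)\<^sup>2" B] assms(3) by simp
  have second_moment_c: "(\<Sum>j\<in>S. p j * (c j)\<^sup>2) \<le> C\<^sup>2"
  proof -
    have "\<forall>j\<in>S. \<bar>(c j)\<^sup>2\<bar> \<le> C\<^sup>2"
      using assms(4) by (metis abs_ge_zero abs_power2 power2_abs power_mono)
    from abs_weighted_mean_le[OF weights this] show ?thesis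
      by (simp add: abs_le_iff)
  qed
  text \<open>Center \<open>a\<close> at its mean and split the weight as \<open>\<surd>p \<cdot> \<surd>p\<close> to apply Cauchy--Schwarz.\<close>
  have covariance: "(\<Sum>j\<in>S. p j * a j * c j) - m * (\<Sum>j\<in>S. p j * c j)
      = (\<Sum>j\<in>S. (sqrt (p j) * (a j - m)) * (sqrt (p j) * c j))"
  proof -
    have "(\<Sum>j\<in>S. (sqrt (p j) * (a j - m)) * (sqrt (p j) * c j))
        = (\<Sum>j\<in>S. p j * a j * c j - m * (p j * c j))"
      using weights(1) by (intro sum.cong) (simp_all add: algebra_simps)
    then show ?thesis
      by (simp add: sum_subtractf sum_distrib_left)
  qed
  have variance: "(\<Sum>j\<in>S. (sqrt (p j) * (a j - m))\<^sup>2) = (\<Sum>j\<in>S. p j * (a j)\<^sup>2) - m\<^sup>2"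
  proof -
    have "(\<Sum>j\<in>S. (sqrt (p j) * (a j - m))\<^sup>2)
        = (\<Sum>j\<in>S. p j * (a j)\<^sup>2 - 2 * m * (p j * a j) + m\<^sup>2 * p j)"
      using weights(1) by (intro sum.cong) (simp_all add: power2_eq_square algebra_simps)
    also have "\<dots> = (\<Sum>j\<in>S. p j * (a j)\<^sup>2) - m\<^sup>2"
      using weights(2)
      by (simp add: sum.distrib sum_subtractf sum_distrib_left[symmetric] m_def power2_eq_square)
    finally show ?thesis .
  qed
  have "((\<Sum>j\<in>S. p j * a j * c j) - m * (\<Sum>j\<in>S. p j * c j))\<^sup>2 \<le> B * C\<^sup>2"
  proof -
    have "(\<Sum>j\<in>S. (sqrt (p j) * (a j - m))\<^sup>2) \<le> B"
      unfolding variance using second_moment_a zero_le_power2[of m] by linarith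
    moreover have "(\<Sum>j\<in>S. (sqrt (p j) * c j)\<^sup>2) \<le> C\<^sup>2"
      using weights(1) second_moment_c by (simp add: power_mult_distrib)
    ultimately show ?thesis
      unfolding covariance
      by (intro order_trans[OF Cauchy_Schwarz_ineq_sum] mult_mono) (simp_all add: \<open>0 \<le> B\<close> sum_nonneg)
  qed
  then have "\<bar>(\<Sum>j\<in>S. p j * a j * c j) - m * (\<Sum>j\<in>S. p j * c j)\<bar> \<le> sqrt (B * C\<^sup>2)"
    by (metis real_sqrt_abs real_sqrt_le_mono)
  also have "\<dots> = C * sqrt B"
    using \<open>0 \<le> C\<close> by (simp add: real_sqrt_mult)
  finally show ?thesis unfolding m_def .
qed

definition softmax :: "'j set \<Rightarrow> ('j \<Rightarrow> real) \<Rightarrow> 'j \<Rightarrow> real" where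
  "softmax S s j = exp (s j) / (\<Sum>l\<in>S. exp (s l))"

lemma softmax_nonneg: "0 \<le> softmax S s j"
  unfolding softmax_def by (simp add: sum_nonneg)

lemma sum_softmax:
  assumes "finite S" "S \<noteq> {}"
  shows "sum (softmax S s) S = 1"
proof -
  have "0 < (\<Sum>l\<in>S. exp (s l))"
    using assms by (intro sum_pos) auto
  then show ?thesis
    unfolding softmax_def by (simp add: sum_divide_distrib[symmetric])
qed

lemma has_real_derivative_softmax_average:
  fixes s c sd cd :: "'j \<Rightarrow> real \<Rightarrow> real"
  assumes "finite S" "S \<noteq> {}"
    and ds: "\<And>j. j \<in> S \<Longrightarrow> (s j has_real_derivative sd j t) (at t)"
    and dc: "\<And>j. j \<in> S \<Longrightarrow> (c j has_real_derivative cd j t) (at t)"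
  defines "p \<equiv> softmax S (\<lambda>j. s j t)"
  shows "((\<lambda>\<tau>. \<Sum>j\<in>S. softmax S (\<lambda>j. s j \<tau>) j * c j \<tau>) has_real_derivative
           (\<Sum>j\<in>S. p j * sd j t * c j t) - (\<Sum>j\<in>S. p j * sd j t) * (\<Sum>j\<in>S. p j * c j t)
           + (\<Sum>j\<in>S. p j * cd j t)) (at t)"
proof -
  define N where "N \<tau> = (\<Sum>j\<in>S. exp (s j \<tau>) * c j \<tau>)" for \<tau>
  define D where "D \<tau> = (\<Sum>j\<in>S. exp (s j \<tau>))" for \<tau>
  define N' where "N' = (\<Sum>j\<in>S. exp (s j t) * (sd j t * c j t + cd j t))"
  define D' where "D' = (\<Sum>j\<in>S. exp (s j t) * sd j t)"
  have D_pos: "0 < D \<tau>" for \<tau>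
    unfolding D_def using assms(1,2) by (intro sum_pos) auto
  have average: "(\<lambda>\<tau>. \<Sum>j\<in>S. softmax S (\<lambda>j. s j \<tau>) j * c j \<tau>) = (\<lambda>\<tau>. N \<tau> / D \<tau>)"
    by (simp add: fun_eq_iff N_def D_def softmax_def sum_divide_distrib)
  have "(N has_real_derivative N') (at t)"
    unfolding N_def N'_def
    by (rule DERIV_sum) (use DERIV_mult[OF DERIV_fun_exp[OF ds] dc] in \<open>simp add: algebra_simps\<close>)
  moreover have "(D has_real_derivative D') (at t)"
    unfolding D_def D'_def
    by (rule DERIV_sum) (use DERIV_fun_exp[OF ds] in \<open>simp add: algebra_simps\<close>)
  ultimately have "((\<lambda>\<tau>. N \<tau> / D \<tau>) has_real_derivative
      N' / D t - (N t / D t) * (D' / D t)) (at t)"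
    using DERIV_divide[of N N' t UNIV D D'] D_pos[of t]
    by (simp add: field_simps)
  moreover have "N' / D t = (\<Sum>j\<in>S. p j * sd j t * c j t + p j * cd j t)"
    "N t / D t = (\<Sum>j\<in>S. p j * c j t)" "D' / D t = (\<Sum>j\<in>S. p j * sd j t)"
    unfolding N'_def N_def D'_def p_def softmax_def D_def[symmetric] sum_divide_distrib
    by (auto intro!: sum.cong simp: add_divide_distrib algebra_simps)
  ultimately show ?thesis
    unfolding average by (simp add: sum.distrib algebra_simps)
qed

lemma softmax_average_diff_le:
  fixes s c sd cd :: "'j \<Rightarrow> real \<Rightarrow> real"
  assumes "finite S" "S \<noteq> {}"
    and ds: "\<And>j t. j \<in> S \<Longrightarrow> (s j has_real_derivative sd j t) (at t)"
    and dc: "\<And>j t. j \<in> S \<Longrightarrow> (c j has_real_derivative cd j t) (at t)"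
    and "\<And>j t. j \<in> S \<Longrightarrow> 0 \<le> t \<Longrightarrow> t \<le> 1 \<Longrightarrow> (sd j t)\<^sup>2 \<le> B"
    and "\<And>j t. j \<in> S \<Longrightarrow> 0 \<le> t \<Longrightarrow> t \<le> 1 \<Longrightarrow> \<bar>c j t\<bar> \<le> C"
    and "\<And>j t. j \<in> S \<Longrightarrow> 0 \<le> t \<Longrightarrow> t \<le> 1 \<Longrightarrow> \<bar>cd j t\<bar> \<le> E"
  shows "\<bar>(\<Sum>j\<in>S. softmax S (\<lambda>j. s j 1) j * c j 1) - (\<Sum>j\<in>S. softmax S (\<lambda>j. s j 0) j * c j 0)\<bar>
         \<le> C * sqrt B + E"
proof -
  define f where "f = (\<lambda>\<tau>. \<Sum>j\<in>S. softmax S (\<lambda>j. s j \<tau>) j * c j \<tau>)"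
  define p where "p \<tau> = softmax S (\<lambda>j. s j \<tau>)" for \<tau>
  define f' where "f' \<tau> = (\<Sum>j\<in>S. p \<tau> j * sd j \<tau> * c j \<tau>)
      - (\<Sum>j\<in>S. p \<tau> j * sd j \<tau>) * (\<Sum>j\<in>S. p \<tau> j * c j \<tau>) + (\<Sum>j\<in>S. p \<tau> j * cd j \<tau>)" for \<tau>
  have "(f has_real_derivative f' \<tau>) (at \<tau>)" for \<tau>
    unfolding f_def f'_def p_def by (intro has_real_derivative_softmax_average assms(1,2) ds dc)
  then obtain z where z: "0 < z" "z < 1" and mvt: "f 1 - f 0 = f' z"
    using MVT2[of 0 1 f f'] by auto
  have weights: "\<forall>j\<in>S. 0 \<le> p z j" "sum (p z) S = 1"
    unfolding p_def using softmax_nonneg sum_softmax[OF assms(1,2)] by auto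
  have "\<bar>(\<Sum>j\<in>S. p z j * sd j z * c j z) - (\<Sum>j\<in>S. p z j * sd j z) * (\<Sum>j\<in>S. p z j * c j z)\<bar>
      \<le> C * sqrt B"
    by (rule abs_weighted_covariance_le[OF weights]) (use assms(5,6) z in auto)
  moreover have "\<bar>\<Sum>j\<in>S. p z j * cd j z\<bar> \<le> E"
    by (rule abs_weighted_mean_le[OF weights]) (use assms(7) z in auto)
  ultimately have "\<bar>f 1 - f 0\<bar> \<le> C * sqrt B + E"
    unfolding mvt f'_def by linarith
  then show ?thesis
    unfolding f_def .
qed

definition attn_average :: "real^'d^'d \<Rightarrow> (real^'d)^'n \<Rightarrow> 'n \<Rightarrow> real^'d" where
  "attn_average A X i = (\<Sum>j\<in>UNIV. attn_P A X i j *\<^sub>R X $ j)"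

lemma self_attention_nth: "self_attention A V X $ i = V *v attn_average A X i"
  unfolding self_attention_def attn_average_def by simp

lemma inner_attn_average:
  "w \<bullet> attn_average A X i =
     (\<Sum>j\<in>UNIV. softmax UNIV (\<lambda>j. X $ i \<bullet> (transpose A *v X $ j)) j * (X $ j \<bullet> w))"
  unfolding attn_average_def attn_P_def softmax_def inner_sum_right
  by (simp add: inner_commute)

lemma power2_add_le: "((x::real) + y)\<^sup>2 \<le> 2 * (x\<^sup>2 + y\<^sup>2)"
  using zero_le_power2[of "x - y"] by (simp add: power2_eq_square algebra_simps)

lemma power2_score_derivative_le:
  assumes "norm a \<le> R" "norm b \<le> R" "norm v \<le> r"
  shows "(u \<bullet> (transpose A *v a) + b \<bullet> (transpose A *v v))\<^sup>2
         \<le> 2 * (spectral_norm A)\<^sup>2 * R\<^sup>2 * ((norm u)\<^sup>2 + r\<^sup>2)"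
proof -
  have "\<bar>u \<bullet> (transpose A *v a)\<bar> \<le> spectral_norm A * norm u * R"
    by (rule order_trans[OF abs_inner_transpose_le], rule mult_left_mono[OF assms(1)])
       (simp add: spectral_norm_nonneg)
  moreover have "\<bar>b \<bullet> (transpose A *v v)\<bar> \<le> spectral_norm A * R * norm v"
    by (rule order_trans[OF abs_inner_transpose_le])
       (intro mult_right_mono mult_left_mono assms(2) spectral_norm_nonneg norm_ge_zero)
  ultimately have "\<bar>u \<bullet> (transpose A *v a) + b \<bullet> (transpose A *v v)\<bar>
      \<le> spectral_norm A * R * (norm u + norm v)"
    by (simp add: algebra_simps abs_triangle_ineq[THEN order_trans])
  then have "(u \<bullet> (transpose A *v a) + b \<bullet> (transpose A *v v))\<^sup>2
      \<le> (spectral_norm A * R)\<^sup>2 * (norm u + norm v)\<^sup>2"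
    by (metis abs_ge_zero power2_abs power_mono power_mult_distrib)
  also have "\<dots> \<le> (spectral_norm A * R)\<^sup>2 * (2 * ((norm u)\<^sup>2 + r\<^sup>2))"
    using power2_add_le[of "norm u" "norm v"] power_mono[OF assms(3) norm_ge_zero, of 2]
    by (intro mult_left_mono) auto
  finally show ?thesis
    by (simp add: algebra_simps)
qed

lemma abs_inner_attn_average_diff_le:
  fixes A :: "real^'d^'d" and X Y :: "(real^'d)^'n"
  assumes "X \<in> ball_tokens R" "Y \<in> ball_tokens R"
  shows "\<bar>w \<bullet> (attn_average A X i - attn_average A Y i)\<bar>
         \<le> norm w * (R * sqrt (2 * (spectral_norm A)\<^sup>2 * R\<^sup>2 * ((norm (X $ i - Y $ i))\<^sup>2 + (norm (X - Y))\<^sup>2))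
                       + norm (X - Y))"
proof -
  define z where "z j t = Y $ j + t *\<^sub>R (X $ j - Y $ j)" for j t
  define s where "s j t = z i t \<bullet> (transpose A *v z j t)" for j t
  define sd where "sd j t = (X $ i - Y $ i) \<bullet> (transpose A *v z j t) + z i t \<bullet> (transpose A *v (X $ j - Y $ j))"
    for j t
  define c where "c j t = z j t \<bullet> w" for j t
  define B where "B = 2 * (spectral_norm A)\<^sup>2 * R\<^sup>2 * ((norm (X $ i - Y $ i))\<^sup>2 + (norm (X - Y))\<^sup>2)"
  have z_le: "norm (z j t) \<le> R" if "0 \<le> t" "t \<le> 1" for j t
    unfolding z_def using assms that by (intro norm_segment_le) (auto simp: ball_tokens_def)
  have row_le: "norm (X $ j - Y $ j) \<le> norm (X - Y)" for j
    using Finite_Cartesian_Product.norm_nth_le[of "X - Y" j] by simp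
  have "(s j has_real_derivative sd j t) (at t)" for j t
    unfolding s_def sd_def z_def by (rule has_real_derivative_inner_matrix_line)
  moreover have "(c j has_real_derivative (X $ j - Y $ j) \<bullet> w) (at t)" for j t
    unfolding c_def z_def inner_add_left inner_scaleR_left
    by (rule derivative_eq_intros refl)+ simp
  moreover have "(sd j t)\<^sup>2 \<le> B" if "0 \<le> t" "t \<le> 1" for j t
    unfolding sd_def B_def by (intro power2_score_derivative_le z_le that row_le)
  moreover have "\<bar>c j t\<bar> \<le> R * norm w" if "0 \<le> t" "t \<le> 1" for j t
    unfolding c_def
    by (rule order_trans[OF Cauchy_Schwarz_ineq2], rule mult_right_mono[OF z_le[OF that]]) simp
  moreover have "\<bar>(X $ j - Y $ j) \<bullet> w\<bar> \<le> norm (X - Y) * norm w" for j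
    by (rule order_trans[OF Cauchy_Schwarz_ineq2], rule mult_right_mono[OF row_le]) simp
  ultimately have "\<bar>(\<Sum>j\<in>UNIV. softmax UNIV (\<lambda>j. s j 1) j * c j 1) - (\<Sum>j\<in>UNIV. softmax UNIV (\<lambda>j. s j 0) j * c j 0)\<bar>
      \<le> R * norm w * sqrt B + norm (X - Y) * norm w"
    by (intro softmax_average_diff_le[where sd = sd and cd = "\<lambda>j t. (X $ j - Y $ j) \<bullet> w"]) auto
  moreover have "z j 1 = X $ j" "z j 0 = Y $ j" for j
    unfolding z_def by simp_all
  ultimately show ?thesis
    unfolding inner_diff_right inner_attn_average B_def
    by (simp add: s_def c_def algebra_simps)
qed

lemma power2_norm_attn_average_diff_le:
  fixes A :: "real^'d^'d" and X Y :: "(real^'d)^'n"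
  assumes "X \<in> ball_tokens R" "Y \<in> ball_tokens R"
  shows "(norm (attn_average A X i - attn_average A Y i))\<^sup>2
         \<le> 4 * (spectral_norm A)\<^sup>2 * R ^ 4 * ((norm (X $ i - Y $ i))\<^sup>2 + (norm (X - Y))\<^sup>2)
           + 2 * (norm (X - Y))\<^sup>2"
proof -
  define w where "w = attn_average A X i - attn_average A Y i"
  define B where "B = 2 * (spectral_norm A)\<^sup>2 * R\<^sup>2 * ((norm (X $ i - Y $ i))\<^sup>2 + (norm (X - Y))\<^sup>2)"
  define K where "K = R * sqrt B + norm (X - Y)"
  have "(norm w)\<^sup>2 \<le> norm w * K"
    using abs_inner_attn_average_diff_le[OF assms, of w A i]
    unfolding w_def[symmetric] B_def[symmetric] K_def[symmetric]
    by (simp add: power2_norm_eq_inner)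
  then have "(norm w)\<^sup>2 \<le> K\<^sup>2"
  proof (cases "w = 0")
    case False
    with \<open>(norm w)\<^sup>2 \<le> norm w * K\<close> have "norm w \<le> K"
      by (simp add: power2_eq_square mult_le_cancel_left_pos)
    then show ?thesis
      by (simp add: power_mono)
  qed simp
  also have "\<dots> \<le> 2 * (R * sqrt B)\<^sup>2 + 2 * (norm (X - Y))\<^sup>2"
    unfolding K_def using power2_add_le by simp
  also have "(R * sqrt B)\<^sup>2 = R\<^sup>2 * B"
    unfolding B_def by (simp add: power_mult_distrib)
  finally show ?thesis
    unfolding w_def B_def by (simp add: power4_eq_xxxx power2_eq_square algebra_simps)
qed

lemma lipschitz_on_rowwise:
  fixes F :: "'a::real_normed_vector^'n \<Rightarrow> 'b::real_normed_vector^'n"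
  assumes rows: "\<And>X Y i. X \<in> S \<Longrightarrow> Y \<in> S \<Longrightarrow>
      (norm (F X $ i - F Y $ i))\<^sup>2 \<le> a * (norm (X $ i - Y $ i))\<^sup>2 + b * (norm (X - Y))\<^sup>2"
    and "0 \<le> a" "0 \<le> b"
  shows "(sqrt (a + real CARD('n) * b))-lipschitz_on S F"
proof (rule lipschitz_onI)
  fix X Y assume "X \<in> S" "Y \<in> S"
  have "(norm (F X - F Y))\<^sup>2 = (\<Sum>i\<in>UNIV. (norm (F X $ i - F Y $ i))\<^sup>2)"
    by (simp add: power2_norm_vec)
  also have "\<dots> \<le> (\<Sum>i\<in>UNIV. a * (norm (X $ i - Y $ i))\<^sup>2 + b * (norm (X - Y))\<^sup>2)"
    by (intro sum_mono rows \<open>X \<in> S\<close> \<open>Y \<in> S\<close>)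
  also have "\<dots> = (sqrt (a + real CARD('n) * b) * norm (X - Y))\<^sup>2"
    using assms(2,3)
    by (simp add: sum.distrib power2_norm_vec[of "X - Y"] sum_distrib_left[symmetric]
        algebra_simps)
  finally show "dist (F X) (F Y) \<le> sqrt (a + real CARD('n) * b) * dist X Y"
    unfolding dist_norm by (rule power2_le_imp_le) (simp add: assms(2,3))
qed (use assms in simp)

lemma power2_norm_self_attention_diff_le:
  fixes A :: "real^'d^'d" and V :: "real^'d^'k" and X Y :: "(real^'d)^'n"
  assumes "X \<in> ball_tokens R" "Y \<in> ball_tokens R"
  shows "(norm (self_attention A V X $ i - self_attention A V Y $ i))\<^sup>2
    \<le> (spectral_norm V)\<^sup>2 * (4 * ((spectral_norm A)\<^sup>2 * R ^ 4)) * (norm (X $ i - Y $ i))\<^sup>2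
      + (spectral_norm V)\<^sup>2 * (4 * ((spectral_norm A)\<^sup>2 * R ^ 4) + 2) * (norm (X - Y))\<^sup>2"
proof -
  have "norm (self_attention A V X $ i - self_attention A V Y $ i)
      \<le> spectral_norm V * norm (attn_average A X i - attn_average A Y i)"
    unfolding self_attention_nth matrix_vector_mult_diff_distrib[symmetric]
    by (rule norm_matrix_vector_mult_le)
  then have "(norm (self_attention A V X $ i - self_attention A V Y $ i))\<^sup>2
      \<le> (spectral_norm V)\<^sup>2 * (norm (attn_average A X i - attn_average A Y i))\<^sup>2"
    by (metis norm_ge_zero power_mono power_mult_distrib)
  also have "\<dots> \<le> (spectral_norm V)\<^sup>2 * (4 * (spectral_norm A)\<^sup>2 * R ^ 4
      * ((norm (X $ i - Y $ i))\<^sup>2 + (norm (X - Y))\<^sup>2) + 2 * (norm (X - Y))\<^sup>2)"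
    by (intro mult_left_mono power2_norm_attn_average_diff_le assms) simp
  finally show ?thesis
    by (simp add: algebra_simps)
qed

theorem mainTheorem1:
  fixes Q K V :: "real^'d^'k" and R :: real
  assumes "R > 0"
  defines "A \<equiv> (1 / sqrt (real CARD('k))) *\<^sub>R (transpose K ** Q)"
  shows "(sqrt 3 * spectral_norm V *
          sqrt ((spectral_norm A)\<^sup>2 * R ^ 4 * (4 * real CARD('n) + 1) + real CARD('n)))
         -lipschitz_on (ball_tokens R :: ((real^'d)^'n) set) (self_attention A V)"
proof -
  define a where "a = (spectral_norm A)\<^sup>2 * R ^ 4"
  define \<nu> where "\<nu> = spectral_norm V"
  define n where "n = real CARD('n)"
  have "(sqrt (\<nu>\<^sup>2 * (4 * a) + n * (\<nu>\<^sup>2 * (4 * a + 2))))-lipschitz_on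
      (ball_tokens R :: ((real^'d)^'n) set) (self_attention A V)"
    unfolding a_def \<nu>_def n_def
    by (rule lipschitz_on_rowwise[OF power2_norm_self_attention_diff_le]) auto
  moreover have "sqrt (\<nu>\<^sup>2 * (4 * a) + n * (\<nu>\<^sup>2 * (4 * a + 2))) \<le> sqrt 3 * \<nu> * sqrt (a * (4 * n + 1) + n)"
  proof -
    have "1 \<le> n" "0 \<le> a"
      unfolding n_def a_def by simp_all
    then have "4 * a + n * (4 * a + 2) \<le> 3 * (a * (4 * n + 1) + n)"
      using mult_right_mono[of 1 n a] by (simp add: algebra_simps)
    then have "\<nu>\<^sup>2 * (4 * a + n * (4 * a + 2)) \<le> \<nu>\<^sup>2 * (3 * (a * (4 * n + 1) + n))"
      by (rule mult_left_mono) simp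
    then have "\<nu>\<^sup>2 * (4 * a) + n * (\<nu>\<^sup>2 * (4 * a + 2)) \<le> 3 * \<nu>\<^sup>2 * (a * (4 * n + 1) + n)"
      by (simp add: algebra_simps)
    moreover have "sqrt (3 * \<nu>\<^sup>2 * (a * (4 * n + 1) + n)) = sqrt 3 * \<nu> * sqrt (a * (4 * n + 1) + n)"
      using spectral_norm_nonneg[of V] unfolding \<nu>_def by (simp add: real_sqrt_mult)
    ultimately show ?thesis
      by (metis real_sqrt_le_mono)
  qed
  ultimately show ?thesis
    unfolding a_def \<nu>_def n_def by (rule lipschitz_on_mono[OF _ order_refl])
qed

end
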